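(* Let $V$ be a finite-dimensional vector space over $\mathbb{F}_q$ and $\xi:\mathbb{F}_q^{\nu_1}\to V$ a surjective linear map, where $\mathbb{F}_q^{\nu_1}$ carries the Hamming weight. Then there exist an integer $\nu_2\le\nu_1$ and a surjective linear map $\varphi:\mathbb{F}_q^{\nu_2}\to V$ (with $\mathbb{F}_q^{\nu_2}$ carrying the Hamming weight) such that $\operatorname{wt}_{\mathrm{quot},\xi}=\operatorname{wt}_{\mathrm{quot},\varphi}$ on $V$, and $\varphi$ is a parent function, i.e. the vectors $\varphi(e_1),\dots,\varphi(e_{\nu_2})$ are pairwise linearly independent, and $d_H(\ker\varphi)\ge3$.
   Context: For a surjective linear map $\psi:(X,\operatorname{wt}_X)\to Y$, the quotient weight is $\operatorname{wt}_{\mathrm{quot},\psi}(y)=\min\{\operatorname{wt}_X(x):x\in\psi^{-1}(y)\}$. $e_i$ denote standard basis vectors. $d_H(C)$ is the minimum Hamming distance between distinct elements of a code $C$. *)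

theory Defs
  imports Main "HOL-Library.Extended_Nat"
begin

definition fvecs :: "nat \<Rightarrow> (nat \<Rightarrow> 'a::zero) set" where
  "fvecs n = {x. \<forall>i\<ge>n. x i = 0}"

definition hweight :: "nat \<Rightarrow> (nat \<Rightarrow> 'a::zero) \<Rightarrow> nat" where
  "hweight n x = card {i. i < n \<and> x i \<noteq> 0}"

definition hdist :: "nat \<Rightarrow> (nat \<Rightarrow> 'a::zero) \<Rightarrow> (nat \<Rightarrow> 'a) \<Rightarrow> nat" where
  "hdist n x y = card {i. i < n \<and> x i \<noteq> y i}"

text \<open>Minimum Hamming distance between distinct elements of a code (infinity if no two).\<close>
definition min_hdist :: "nat \<Rightarrow> (nat \<Rightarrow> 'a::zero) set \<Rightarrow> enat" where
  "min_hdist n C = (INF p \<in> {(x, y). x \<in> C \<and> y \<in> C \<and> x \<noteq> y}. enat (hdist n (fst p) (snd p)))"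

definition unitvec :: "nat \<Rightarrow> nat \<Rightarrow> 'a::{zero,one}" where
  "unitvec i = (\<lambda>j. if j = i then 1 else 0)"

definition lin_map_on :: "('a::field \<Rightarrow> 'v::ab_group_add \<Rightarrow> 'v) \<Rightarrow> nat \<Rightarrow> ((nat \<Rightarrow> 'a) \<Rightarrow> 'v) \<Rightarrow> bool" where
  "lin_map_on scale n f \<longleftrightarrow>
     (\<forall>x\<in>fvecs n. \<forall>y\<in>fvecs n. f (\<lambda>i. x i + y i) = f x + f y) \<and>
     (\<forall>c. \<forall>x\<in>fvecs n. f (\<lambda>i. c * x i) = scale c (f x))"

definition ker_on :: "nat \<Rightarrow> ((nat \<Rightarrow> 'a::zero) \<Rightarrow> 'v::zero) \<Rightarrow> (nat \<Rightarrow> 'a) set" where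
  "ker_on n f = {x \<in> fvecs n. f x = 0}"

definition quot_wt :: "nat \<Rightarrow> ((nat \<Rightarrow> 'a::zero) \<Rightarrow> 'v) \<Rightarrow> 'v \<Rightarrow> nat" where
  "quot_wt n f y = (LEAST w. \<exists>x\<in>fvecs n. f x = y \<and> hweight n x = w)"

end

theory Submission
  imports Defs
begin

(* Keep, for every line of V spanned by a nonzero column of xi, the first column spanning it,
   and let phi be the map with these columns.  Each column of xi is zero or a multiple of a
   column of phi and vice versa, so a vector in either fibre over v can be traded, one
   coordinate at a time, for a vector of no larger weight in the other fibre; hence the
   quotient weights agree.  The columns of phi are nonzero and pairwise independent, so no
   nonzero kernel vector is supported on one or two coordinates. *)

lemma unitvec_in_fvecs: "i < n \<Longrightarrow> unitvec i \<in> fvecs n"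
  by (simp add: unitvec_def fvecs_def)

lemma hweight_Suc: "hweight (Suc n) x = hweight n x + (if x n = 0 then 0 else 1)"
proof -
  have "{i. i < Suc n \<and> x i \<noteq> 0} =
      (if x n = 0 then {i. i < n \<and> x i \<noteq> 0} else insert n {i. i < n \<and> x i \<noteq> 0})"
    by (auto simp: less_Suc_eq)
  then show ?thesis by (simp add: hweight_def)
qed

lemma hweight_add_unitvec_le:
  fixes y :: "nat \<Rightarrow> 'a::ring_1"
  shows "hweight n (\<lambda>j. y j + c * unitvec k j) \<le> hweight n y + 1"
proof -
  have "{j. j < n \<and> y j + c * unitvec k j \<noteq> 0} \<subseteq> insert k {j. j < n \<and> y j \<noteq> 0}"
    by (auto simp: unitvec_def)
  then have "hweight n (\<lambda>j. y j + c * unitvec k j) \<le> card (insert k {j. j < n \<and> y j \<noteq> 0})"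
    unfolding hweight_def by (intro card_mono) auto
  also have "\<dots> \<le> hweight n y + 1"
    unfolding hweight_def by (simp add: card_insert_le_m1)
  finally show ?thesis .
qed

lemma hdist_eq_hweight_diff: "hdist n x y = hweight n (\<lambda>i. x i - y i :: 'a::ab_group_add)"
  by (simp add: hdist_def hweight_def)

lemma quot_wt_le_hweight: "x \<in> fvecs n \<Longrightarrow> quot_wt n f (f x) \<le> hweight n x"
  unfolding quot_wt_def by (rule Least_le) blast

lemma quot_wt_attained:
  assumes "v \<in> f ` fvecs n"
  shows "\<exists>x\<in>fvecs n. f x = v \<and> hweight n x = quot_wt n f v"
  using LeastI_ex[of "\<lambda>w. \<exists>x\<in>fvecs n. f x = v \<and> hweight n x = w"] assms
  unfolding quot_wt_def by blast

lemma quot_wt_le_quot_wt: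
  assumes "v \<in> f ` fvecs m"
    and "\<And>x. x \<in> fvecs m \<Longrightarrow> \<exists>y\<in>fvecs n. g y = f x \<and> hweight n y \<le> hweight m x"
  shows "quot_wt n g v \<le> quot_wt m f v"
proof -
  obtain x where x: "x \<in> fvecs m" "f x = v" "hweight m x = quot_wt m f v"
    using quot_wt_attained[OF assms(1)] by blast
  then obtain y where "y \<in> fvecs n" "g y = v" "hweight n y \<le> hweight m x"
    using assms(2) by blast
  then show ?thesis
    using quot_wt_le_hweight[of y n g] x(3) by simp
qed

definition column_map ::
    "('a \<Rightarrow> 'v \<Rightarrow> 'v) \<Rightarrow> (nat \<Rightarrow> 'v::comm_monoid_add) \<Rightarrow> nat \<Rightarrow> (nat \<Rightarrow> 'a) \<Rightarrow> 'v" where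
  "column_map scale d n y = (\<Sum>k<n. scale (y k) (d k))"

definition lin_indep_pair :: "('a::field \<Rightarrow> 'v \<Rightarrow> 'v) \<Rightarrow> 'v \<Rightarrow> 'v::ab_group_add \<Rightarrow> bool" where
  "lin_indep_pair scale u w \<longleftrightarrow> (\<forall>a b. scale a u + scale b w = 0 \<longrightarrow> a = 0 \<and> b = 0)"

lemma lin_indep_pair_commute: "lin_indep_pair scale u w \<longleftrightarrow> lin_indep_pair scale w u"
  unfolding lin_indep_pair_def by (metis add.commute)

lemma lin_map_on_add:
  "lin_map_on scale n f \<Longrightarrow> x \<in> fvecs n \<Longrightarrow> y \<in> fvecs n \<Longrightarrow> f (\<lambda>i. x i + y i) = f x + f y"
  by (simp add: lin_map_on_def)

lemma lin_map_on_scale: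
  "lin_map_on scale n f \<Longrightarrow> x \<in> fvecs n \<Longrightarrow> f (\<lambda>i. c * x i) = scale c (f x)"
  by (simp add: lin_map_on_def)

context vector_space
begin

lemma lin_indep_pair_if_not_multiple:
  assumes "u \<noteq> 0" and "\<And>c. w \<noteq> scale c u"
  shows "lin_indep_pair scale u w"
  unfolding lin_indep_pair_def
proof (intro allI impI)
  fix a b assume ab: "scale a u + scale b w = 0"
  have "b = 0"
  proof (rule ccontr)
    assume "b \<noteq> 0"
    have "scale b w = scale (- a) u"
      using ab by (simp add: eq_neg_iff_add_eq_0 add.commute)
    then have "scale (inverse b) (scale b w) = scale (inverse b) (scale (- a) u)"
      by simp
    with \<open>b \<noteq> 0\<close> have "w = scale (- a / b) u"
      by (simp add: scale_scale divide_inverse mult.commute)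
    with assms(2) show False by blast
  qed
  with ab assms(1) show "a = 0 \<and> b = 0" by simp
qed

lemma lin_map_on_column_map: "lin_map_on scale n (column_map scale d n)"
  unfolding lin_map_on_def column_map_def
  by (simp add: scale_left_distrib sum.distrib scale_sum_right scale_scale)

lemma column_map_unitvec: "i < n \<Longrightarrow> column_map scale d n (unitvec i) = d i"
proof -
  assume "i < n"
  then have "column_map scale d n (unitvec i) = (\<Sum>k\<in>{i}. scale (unitvec i k) (d k))"
    unfolding column_map_def by (intro sum.mono_neutral_right) (auto simp: unitvec_def)
  then show ?thesis by (simp add: unitvec_def)
qed

lemma lin_map_on_zero: "lin_map_on scale n f \<Longrightarrow> f (\<lambda>_. 0) = 0"
  using lin_map_on_scale[of scale n f "\<lambda>_. 0" 0] by (simp add: fvecs_def)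

lemma lin_map_on_add_scaled_unitvec:
  assumes "lin_map_on scale n f" "y \<in> fvecs n" "k < n"
  shows "f (\<lambda>j. y j + c * unitvec k j) = f y + scale c (f (unitvec k))"
proof -
  have "(\<lambda>j. c * unitvec k j) \<in> fvecs n"
    using assms(3) by (simp add: unitvec_def fvecs_def)
  then show ?thesis
    using lin_map_on_add[OF assms(1,2)] lin_map_on_scale[OF assms(1) unitvec_in_fvecs[OF assms(3)]]
    by simp
qed

lemma lin_map_on_eq_column_map:
  assumes f: "lin_map_on scale n f" and x: "x \<in> fvecs n"
  shows "f x = column_map scale (\<lambda>i. f (unitvec i)) n x"
proof -
  have "m \<le> n \<Longrightarrow> x \<in> fvecs m \<Longrightarrow> f x = column_map scale (\<lambda>i. f (unitvec i)) m x" for m x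
  proof (induction m arbitrary: x)
    case 0
    then have "x = (\<lambda>_. 0)" by (auto simp: fvecs_def)
    then show ?case using lin_map_on_zero[OF f] by (simp add: column_map_def)
  next
    case (Suc m)
    define x' where "x' = x(m := 0)"
    have x'm: "x' \<in> fvecs m" using Suc.prems(2) by (auto simp: x'_def fvecs_def)
    then have x'n: "x' \<in> fvecs n" using Suc.prems(1) by (auto simp: fvecs_def)
    have "f x = f (\<lambda>j. x' j + x m * unitvec m j)"
      by (rule arg_cong[where f = f]) (auto simp: x'_def unitvec_def)
    also have "\<dots> = f x' + scale (x m) (f (unitvec m))"
      using lin_map_on_add_scaled_unitvec[OF f x'n, of m] Suc.prems(1) by simp
    also have "f x' = column_map scale (\<lambda>i. f (unitvec i)) m x"
      using Suc x'm by (simp add: column_map_def x'_def)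
    finally show ?case by (simp add: column_map_def)
  qed
  then show ?thesis using x by blast
qed

lemma exists_preimage_hweight_le:
  assumes f: "lin_map_on scale m f" and g: "lin_map_on scale n g"
    and cols: "\<And>i. i < m \<Longrightarrow> f (unitvec i) = 0 \<or> (\<exists>c. \<exists>k<n. f (unitvec i) = scale c (g (unitvec k)))"
    and x: "x \<in> fvecs m"
  shows "\<exists>y\<in>fvecs n. g y = f x \<and> hweight n y \<le> hweight m x"
proof -
  let ?F = "\<lambda>i. f (unitvec i)"
  have "\<exists>y\<in>fvecs n. g y = column_map scale ?F l x \<and> hweight n y \<le> hweight l x" if "l \<le> m" for l
    using that
  proof (induction l)
    case 0
    have "(\<lambda>_. 0) \<in> fvecs n" by (simp add: fvecs_def)
    then show ?case using lin_map_on_zero[OF g] by (auto simp: column_map_def hweight_def)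
  next
    case (Suc l)
    then obtain y where y: "y \<in> fvecs n" "g y = column_map scale ?F l x" "hweight n y \<le> hweight l x"
      by auto
    have step: "column_map scale ?F (Suc l) x = column_map scale ?F l x + scale (x l) (?F l)"
      by (simp add: column_map_def)
    show ?case
    proof (cases "x l = 0 \<or> ?F l = 0")
      case True
      with y show ?thesis by (auto simp: step hweight_Suc)
    next
      case False
      then obtain c k where k: "k < n" and c: "?F l = scale c (g (unitvec k))"
        using cols[OF Suc_le_lessD[OF Suc.prems]] by blast
      define y' where "y' = (\<lambda>j. y j + (x l * c) * unitvec k j)"
      have "y' \<in> fvecs n" using y(1) k by (simp add: y'_def fvecs_def unitvec_def)
      moreover have "g y' = column_map scale ?F (Suc l) x"
        using lin_map_on_add_scaled_unitvec[OF g y(1) k, of "x l * c"]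
        by (simp add: y'_def step y(2) c scale_scale)
      moreover have "hweight n y' \<le> hweight (Suc l) x"
        using hweight_add_unitvec_le[of n y "x l * c" k] y(3) False by (simp add: y'_def hweight_Suc)
      ultimately show ?thesis by blast
    qed
  qed
  then show ?thesis using lin_map_on_eq_column_map[OF f x] by simp
qed


lemma quot_wt_le_if_columns_multiples:
  assumes "lin_map_on scale m f" and "lin_map_on scale n g"
    and "\<And>i. i < m \<Longrightarrow> f (unitvec i) = 0 \<or> (\<exists>c. \<exists>k<n. f (unitvec i) = scale c (g (unitvec k)))"
    and "v \<in> f ` fvecs m"
  shows "quot_wt n g v \<le> quot_wt m f v"
  using assms(4) exists_preimage_hweight_le[OF assms(1-3)] by (rule quot_wt_le_quot_wt)

lemma exists_lin_indep_pair_representatives: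
  fixes u :: "nat \<Rightarrow> 'b"
  shows "\<exists>n \<sigma>. n \<le> m \<and> (\<forall>k<n. \<sigma> k < m \<and> u (\<sigma> k) \<noteq> 0) \<and>
    (\<forall>k<n. \<forall>l<n. k \<noteq> l \<longrightarrow> lin_indep_pair scale (u (\<sigma> k)) (u (\<sigma> l))) \<and>
    (\<forall>i<m. u i = 0 \<or> (\<exists>c. \<exists>k<n. u i = scale c (u (\<sigma> k))))"
proof (induction m)
  case 0
  show ?case by auto
next
  case (Suc m)
  then obtain n \<sigma> where n: "n \<le> m" and \<sigma>: "\<forall>k<n. \<sigma> k < m \<and> u (\<sigma> k) \<noteq> 0"
    and indep: "\<forall>k<n. \<forall>l<n. k \<noteq> l \<longrightarrow> lin_indep_pair scale (u (\<sigma> k)) (u (\<sigma> l))"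
    and cover: "\<forall>i<m. u i = 0 \<or> (\<exists>c. \<exists>k<n. u i = scale c (u (\<sigma> k)))"
    by blast
  show ?case
  proof (cases "u m = 0 \<or> (\<exists>c. \<exists>k<n. u m = scale c (u (\<sigma> k)))")
    case True
    with n \<sigma> indep cover show ?thesis
      by (intro exI[of _ n] exI[of _ \<sigma>]) (auto simp: less_Suc_eq)
  next
    case False
    define \<sigma>' where "\<sigma>' = \<sigma>(n := m)"
    have new: "lin_indep_pair scale (u (\<sigma> k)) (u m)" if "k < n" for k
      using False that \<sigma> by (intro lin_indep_pair_if_not_multiple) auto
    moreover have "lin_indep_pair scale (u m) (u (\<sigma> k))" if "k < n" for k
      using new[OF that] lin_indep_pair_commute by blast
    ultimately have
      "\<forall>k<Suc n. \<forall>l<Suc n. k \<noteq> l \<longrightarrow> lin_indep_pair scale (u (\<sigma>' k)) (u (\<sigma>' l))"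
      using indep by (auto simp: \<sigma>'_def less_Suc_eq)
    moreover have "\<forall>i<Suc m. u i = 0 \<or> (\<exists>c. \<exists>k<Suc n. u i = scale c (u (\<sigma>' k)))"
    proof (intro allI impI)
      fix i assume "i < Suc m"
      then consider "i < m" | "i = m" by linarith
      then show "u i = 0 \<or> (\<exists>c. \<exists>k<Suc n. u i = scale c (u (\<sigma>' k)))"
      proof cases
        case 1
        with cover show ?thesis by (fastforce simp: \<sigma>'_def intro: less_SucI)
      next
        case 2
        then show ?thesis by (intro disjI2 exI[of _ 1] exI[of _ n]) (simp add: \<sigma>'_def)
      qed
    qed
    moreover have "\<forall>k<Suc n. \<sigma>' k < Suc m \<and> u (\<sigma>' k) \<noteq> 0"
      using \<sigma> False by (auto simp: \<sigma>'_def less_Suc_eq)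
    ultimately show ?thesis
      using n by (intro exI[of _ "Suc n"] exI[of _ \<sigma>']) simp
  qed
qed

lemma hweight_ker_on_ge_3:
  assumes g: "lin_map_on scale n g"
    and nonzero: "\<And>k. k < n \<Longrightarrow> g (unitvec k) \<noteq> 0"
    and indep: "\<And>k l. k < n \<Longrightarrow> l < n \<Longrightarrow> k \<noteq> l \<Longrightarrow>
      lin_indep_pair scale (g (unitvec k)) (g (unitvec l))"
    and z: "z \<in> ker_on n g" and pos: "0 < hweight n z"
  shows "3 \<le> hweight n z"
proof (rule ccontr)
  define T where "T = {i. i < n \<and> z i \<noteq> 0}"
  assume "\<not> 3 \<le> hweight n z"
  with pos have "card T = 1 \<or> card T = 2" unfolding hweight_def T_def by linarith
  moreover have "(\<Sum>k\<in>T. scale (z k) (g (unitvec k))) = 0"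
  proof -
    have "(\<Sum>k\<in>T. scale (z k) (g (unitvec k))) = column_map scale (\<lambda>i. g (unitvec i)) n z"
      unfolding column_map_def by (rule sum.mono_neutral_left) (auto simp: T_def)
    also have "\<dots> = g z"
      using z by (intro lin_map_on_eq_column_map[OF g, symmetric]) (simp add: ker_on_def)
    also have "\<dots> = 0"
      using z by (simp add: ker_on_def)
    finally show ?thesis .
  qed
  ultimately show False
  proof (elim disjE)
    assume "card T = 1" and "(\<Sum>k\<in>T. scale (z k) (g (unitvec k))) = 0"
    moreover obtain i where "T = {i}"
      using \<open>card T = 1\<close> by (rule card_1_singletonE)
    ultimately show False
      using nonzero by (auto simp: T_def)
  next
    assume "card T = 2" and "(\<Sum>k\<in>T. scale (z k) (g (unitvec k))) = 0"
    then obtain i j where "T = {i, j}" "i \<noteq> j"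
      and "scale (z i) (g (unitvec i)) + scale (z j) (g (unitvec j)) = 0"
      by (auto simp: card_2_iff)
    moreover from \<open>T = {i, j}\<close> have "i < n" "j < n" "z i \<noteq> 0"
      unfolding T_def by blast+
    ultimately show False
      using indep[of i j] by (simp add: lin_indep_pair_def)
  qed
qed

lemma min_hdist_ker_on_ge:
  assumes g: "lin_map_on scale n g"
    and wt: "\<And>z. z \<in> ker_on n g \<Longrightarrow> 0 < hweight n z \<Longrightarrow> w \<le> hweight n z"
  shows "enat w \<le> min_hdist n (ker_on n g)"
  unfolding min_hdist_def
proof (rule INF_greatest, clarify)
  fix x y assume x: "x \<in> ker_on n g" and y: "y \<in> ker_on n g" and "x \<noteq> y"
  define z where "z = (\<lambda>i. x i - y i)"
  have "z \<in> fvecs n" using x y by (simp add: z_def ker_on_def fvecs_def)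
  moreover have "g z = 0"
  proof -
    have "(\<lambda>i. - 1 * y i) \<in> fvecs n" using y by (simp add: ker_on_def fvecs_def)
    then have "g z = g x + g (\<lambda>i. - 1 * y i)"
      using lin_map_on_add[OF g, of x "\<lambda>i. - 1 * y i"] x by (simp add: z_def ker_on_def)
    also have "\<dots> = 0"
      using lin_map_on_scale[OF g, of y "- 1"] x y by (simp add: ker_on_def)
    finally show ?thesis .
  qed
  moreover have "0 < hweight n z"
  proof -
    from \<open>x \<noteq> y\<close> obtain i where "x i \<noteq> y i" by blast
    moreover have "i < n"
      using x y \<open>x i \<noteq> y i\<close> by (cases "i < n") (auto simp: ker_on_def fvecs_def)
    ultimately show ?thesis by (auto simp: hweight_def z_def card_gt_0_iff)
  qed
  ultimately show "enat w \<le> enat (hdist n (fst (x, y)) (snd (x, y)))"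
    using wt by (simp add: hdist_eq_hweight_diff z_def ker_on_def)
qed

end

theorem corollary4p1:
  fixes scale :: "'a::{finite,field} \<Rightarrow> 'v::ab_group_add \<Rightarrow> 'v"
    and \<xi> :: "(nat \<Rightarrow> 'a) \<Rightarrow> 'v" and \<nu>\<^sub>1 :: nat
  assumes "vector_space scale"
    and "\<exists>B. finite_dimensional_vector_space scale B"
    and "lin_map_on scale \<nu>\<^sub>1 \<xi>"
    and "\<xi> ` fvecs \<nu>\<^sub>1 = UNIV"
  shows "\<exists>\<nu>\<^sub>2 :: nat. \<exists>\<phi> :: (nat \<Rightarrow> 'a) \<Rightarrow> 'v.
           \<nu>\<^sub>2 \<le> \<nu>\<^sub>1 \<and> lin_map_on scale \<nu>\<^sub>2 \<phi> \<and> \<phi> ` fvecs \<nu>\<^sub>2 = UNIV \<and>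
           (\<forall>v. quot_wt \<nu>\<^sub>1 \<xi> v = quot_wt \<nu>\<^sub>2 \<phi> v) \<and>
           (\<forall>i<\<nu>\<^sub>2. \<forall>j<\<nu>\<^sub>2. i \<noteq> j \<longrightarrow>
              (\<forall>a b. scale a (\<phi> (unitvec i)) + scale b (\<phi> (unitvec j)) = 0 \<longrightarrow> a = 0 \<and> b = 0)) \<and>
           min_hdist \<nu>\<^sub>2 (ker_on \<nu>\<^sub>2 \<phi>) \<ge> 3"
proof -
  interpret vector_space scale by fact
  let ?col = "\<lambda>i. \<xi> (unitvec i)"
  obtain n \<sigma> where "n \<le> \<nu>\<^sub>1" and \<sigma>: "\<forall>k<n. \<sigma> k < \<nu>\<^sub>1 \<and> ?col (\<sigma> k) \<noteq> 0"
    and indep: "\<forall>k<n. \<forall>l<n. k \<noteq> l \<longrightarrow> lin_indep_pair scale (?col (\<sigma> k)) (?col (\<sigma> l))"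
    and cover: "\<forall>i<\<nu>\<^sub>1. ?col i = 0 \<or> (\<exists>c. \<exists>k<n. ?col i = scale c (?col (\<sigma> k)))"
    using exists_lin_indep_pair_representatives[of \<nu>\<^sub>1 ?col] by blast
  define \<phi> where "\<phi> = column_map scale (\<lambda>k. ?col (\<sigma> k)) n"
  have \<phi>: "lin_map_on scale n \<phi>"
    unfolding \<phi>_def by (rule lin_map_on_column_map)
  have \<phi>_unitvec: "\<phi> (unitvec k) = ?col (\<sigma> k)" if "k < n" for k
    using that by (simp add: \<phi>_def column_map_unitvec)
  have \<xi>_by_\<phi>: "?col i = 0 \<or> (\<exists>c. \<exists>k<n. ?col i = scale c (\<phi> (unitvec k)))"
    if "i < \<nu>\<^sub>1" for i
    using cover[rule_format, OF that] \<phi>_unitvec by metis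
  have \<phi>_by_\<xi>: "\<phi> (unitvec k) = 0 \<or> (\<exists>c. \<exists>i<\<nu>\<^sub>1. \<phi> (unitvec k) = scale c (?col i))"
    if "k < n" for k
    using \<sigma> that \<phi>_unitvec by (metis scale_one)
  have \<phi>_surj: "\<phi> ` fvecs n = UNIV"
    using exists_preimage_hweight_le[OF assms(3) \<phi> \<xi>_by_\<phi>] assms(4) by force
  have "quot_wt \<nu>\<^sub>1 \<xi> v = quot_wt n \<phi> v" for v
    using quot_wt_le_if_columns_multiples[OF assms(3) \<phi> \<xi>_by_\<phi>]
      quot_wt_le_if_columns_multiples[OF \<phi> assms(3) \<phi>_by_\<xi>] assms(4) \<phi>_surj
    by (simp add: order_antisym)
  moreover have "enat 3 \<le> min_hdist n (ker_on n \<phi>)"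
    using \<sigma> indep \<phi>_unitvec
    by (intro min_hdist_ker_on_ge[OF \<phi>] hweight_ker_on_ge_3[OF \<phi>]) auto
  ultimately show ?thesis
    using \<open>n \<le> \<nu>\<^sub>1\<close> \<phi> \<phi>_surj indep \<phi>_unitvec
    by (intro exI[of _ n] exI[of _ \<phi>]) (auto simp: lin_indep_pair_def numeral_eq_enat)
qed

end
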